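(* $W_{\max}(17,9)\in\{5,6,\dots,18\}$ and $W_{\max}(18,9)\in\{4,5,\dots,21\}$.
   Context: A weighing matrix of order $n$ and weight $k$ is an $n\times n$ matrix $W$ with entries in $\{1,-1,0\}$ such that $WW^T=kI_n$. Two weighing matrices $W_1,W_2$ of order $n$ and weight $k$ are unbiased if $\frac{1}{\sqrt{k}}W_1W_2^T$ is also a weighing matrix of order $n$ and weight $k$; a set is mutually unbiased if any two distinct members are unbiased. $W_{\max}(n,9)$ denotes the maximum size of a set of mutually unbiased weighing matrices of order $n$ and weight $9$. *)

theory Defs
  imports Complex_Main "Jordan_Normal_Form.Matrix"
begin

definition weighing_matrix :: "nat \<Rightarrow> nat \<Rightarrow> real mat \<Rightarrow> bool" where
  "weighing_matrix n k W \<longleftrightarrow>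
     W \<in> carrier_mat n n \<and>
     (\<forall>i<n. \<forall>j<n. W $$ (i, j) \<in> {1, -1, 0}) \<and>
     W * transpose_mat W = of_nat k \<cdot>\<^sub>m one_mat n"

definition unbiased :: "nat \<Rightarrow> nat \<Rightarrow> real mat \<Rightarrow> real mat \<Rightarrow> bool" where
  "unbiased n k W1 W2 \<longleftrightarrow>
     weighing_matrix n k W1 \<and> weighing_matrix n k W2 \<and>
     weighing_matrix n k ((1 / sqrt (real k)) \<cdot>\<^sub>m (W1 * transpose_mat W2))"

definition mutually_unbiased :: "nat \<Rightarrow> nat \<Rightarrow> real mat set \<Rightarrow> bool" where
  "mutually_unbiased n k S \<longleftrightarrow>
     (\<forall>W\<in>S. weighing_matrix n k W) \<and>
     (\<forall>W1\<in>S. \<forall>W2\<in>S. W1 \<noteq> W2 \<longrightarrow> unbiased n k W1 W2)"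

text \<open>Maximum size of a (finite) set of mutually unbiased weighing matrices.
  All such sets are finite anyway, since entries lie in {1,-1,0}.\<close>
definition W_max :: "nat \<Rightarrow> nat \<Rightarrow> nat" where
  "W_max n k = Max {card S | S. finite S \<and> mutually_unbiased n k S}"

end

theory Submission
  imports Defs "HOL-Analysis.Convex" "Jordan_Normal_Form.Determinant"
begin

text \<open>
  Upper bounds: adjoin \<open>sqrt k \<cdot> I\<close> to a set \<open>S\<close> of mutually unbiased weighing matrices of
  order \<open>n\<close> and weight \<open>k\<close>. Their \<open>N = n (card S + 1)\<close> rows are vectors of squared norm \<open>k\<close>;
  two rows of the same matrix have inner product \<open>0\<close> or \<open>k\<close>, rows of different matrices have
  inner product \<open>0\<close> or \<open>\<plusminus>sqrt k\<close>, so the quartic frame potential \<open>\<Sum>\<^sub>x\<^sub>,\<^sub>y \<langle>x, y\<rangle>\<^sup>4\<close> can be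
  computed exactly. Pairing \<open>\<Sum>\<^sub>x x\<otimes>x\<otimes>x\<otimes>x\<close> with the isotropic tensor and applying
  Cauchy-Schwarz bounds this potential below by \<open>3 k\<^sup>4 N\<^sup>2 / (n (n + 2))\<close>, which yields
  \<open>3 k (card S + 1) \<le> (k + card S) (n + 2)\<close>; for \<open>k = 9\<close> this means \<open>card S \<le> 18\<close> when
  \<open>n = 17\<close> and \<open>card S \<le> 21\<close> when \<open>n = 18\<close>.
  Lower bounds: explicit sets of 5 and 4 mutually unbiased weighing matrices, checked by
  evaluation.
\<close>

section \<open>The quartic frame potential\<close>

definition iso_tensor :: "'i \<times> 'i \<times> 'i \<times> 'i \<Rightarrow> real" where
  "iso_tensor = (\<lambda>(i, j, k, l).
     of_bool (i = j \<and> k = l) + of_bool (i = k \<and> j = l) + of_bool (i = l \<and> j = k))"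

lemma sum_mult_of_bool_reindex:
  fixes F :: "'a \<Rightarrow> real"
  assumes "finite A" "inj_on h B" "{p \<in> A. Q p} = h ` B"
  shows "(\<Sum>p\<in>A. F p * of_bool (Q p)) = (\<Sum>q\<in>B. F (h q))"
proof -
  have "(\<Sum>p\<in>A. F p * of_bool (Q p)) = (\<Sum>p\<in>A. if Q p then F p else 0)"
    by (rule sum.cong) auto
  also have "\<dots> = sum F {p \<in> A. Q p}"
    using assms(1) by (rule sum.inter_filter[symmetric])
  also have "\<dots> = (\<Sum>q\<in>B. F (h q))"
    using assms(2,3) by (simp add: sum.reindex)
  finally show ?thesis .
qed

lemma sum_mult_iso_tensor:
  fixes F :: "'i \<times> 'i \<times> 'i \<times> 'i \<Rightarrow> real"
  assumes "finite I"
  shows "(\<Sum>p\<in>I \<times> I \<times> I \<times> I. F p * iso_tensor p) =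
    (\<Sum>(i, k)\<in>I \<times> I. F (i, i, k, k)) + (\<Sum>(i, j)\<in>I \<times> I. F (i, j, i, j)) + (\<Sum>(i, j)\<in>I \<times> I. F (i, j, j, i))"
proof -
  let ?P = "I \<times> I \<times> I \<times> I"
  have "(\<Sum>p\<in>?P. F p * iso_tensor p) =
      (\<Sum>p\<in>?P. F p * of_bool (case p of (i, j, k, l) \<Rightarrow> i = j \<and> k = l))
    + (\<Sum>p\<in>?P. F p * of_bool (case p of (i, j, k, l) \<Rightarrow> i = k \<and> j = l))
    + (\<Sum>p\<in>?P. F p * of_bool (case p of (i, j, k, l) \<Rightarrow> i = l \<and> j = k))"
    by (simp add: iso_tensor_def split_def distrib_left sum.distrib)
  also have "\<dots> = (\<Sum>(i, k)\<in>I \<times> I. F (i, i, k, k)) + (\<Sum>(i, j)\<in>I \<times> I. F (i, j, i, j))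
      + (\<Sum>(i, j)\<in>I \<times> I. F (i, j, j, i))"
    using assms
    by (subst (1 2 3) sum_mult_of_bool_reindex[where B = "I \<times> I"])
      (auto simp: inj_on_def split_def image_iff)
  finally show ?thesis .
qed

lemma sum_rank_one_mult_iso_tensor:
  fixes a :: "'i \<Rightarrow> real"
  assumes "finite I"
  shows "(\<Sum>p\<in>I \<times> I \<times> I \<times> I. (case p of (i, j, k, l) \<Rightarrow> a i * a j * a k * a l) * iso_tensor p)
    = 3 * (\<Sum>i\<in>I. a i ^ 2) ^ 2"
proof -
  have sq: "(\<Sum>(i, k)\<in>I \<times> I. a i * a i * a k * a k) = (\<Sum>i\<in>I. a i ^ 2) ^ 2"
    by (simp add: sum.cartesian_product power2_eq_square sum_product mult_ac)
  have "(\<Sum>p\<in>I \<times> I \<times> I \<times> I. (case p of (i, j, k, l) \<Rightarrow> a i * a j * a k * a l) * iso_tensor p)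
    = (\<Sum>(i, k)\<in>I \<times> I. a i * a i * a k * a k) + (\<Sum>(i, k)\<in>I \<times> I. a i * a k * a i * a k)
      + (\<Sum>(i, k)\<in>I \<times> I. a i * a k * a k * a i)"
    using sum_mult_iso_tensor[OF assms, of "\<lambda>(i, j, k, l). a i * a j * a k * a l"]
    by (simp add: split_def)
  also have "\<dots> = 3 * (\<Sum>(i, k)\<in>I \<times> I. a i * a i * a k * a k)"
    by (simp add: mult_ac)
  finally show ?thesis unfolding sq .
qed

lemma iso_tensor_paired:
  "iso_tensor (i, i, k, k) = 1 + 2 * of_bool (i = k)"
  "iso_tensor (i, k, i, k) = 1 + 2 * of_bool (i = k)"
  "iso_tensor (i, k, k, i) = 1 + 2 * of_bool (i = k)"
  by (auto simp: iso_tensor_def)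

lemma sum_iso_tensor_squared:
  assumes "finite I"
  shows "(\<Sum>p\<in>I \<times> I \<times> I \<times> I. iso_tensor p ^ 2) = 3 * real (card I) ^ 2 + 6 * real (card I)"
proof -
  have "(\<Sum>(i, k)\<in>I \<times> I. 1 + 2 * of_bool (i = k) :: real) = (\<Sum>i\<in>I. real (card I) + 2)"
    using assms by (simp add: sum.distrib of_bool_def flip: sum_distrib_left sum.cartesian_product)
  also have "\<dots> = real (card I) ^ 2 + 2 * real (card I)"
    by (simp add: power2_eq_square algebra_simps)
  finally have diag: "(\<Sum>(i, k)\<in>I \<times> I. 1 + 2 * of_bool (i = k) :: real)
    = real (card I) ^ 2 + 2 * real (card I)" .
  show ?thesis
    using sum_mult_iso_tensor[OF assms, of iso_tensor]
    by (simp add: power2_eq_square iso_tensor_paired diag)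
qed

lemma power4_sum_mult:
  fixes a b :: "'i \<Rightarrow> real"
  shows "(\<Sum>i\<in>I. a i * b i) ^ 4 =
    (\<Sum>(i, j, k, l)\<in>I \<times> I \<times> I \<times> I. (a i * a j * a k * a l) * (b i * b j * b k * b l))"
  by (simp add: power4_eq_xxxx sum_distrib_left sum_distrib_right mult_ac
      flip: sum.cartesian_product)

theorem quartic_frame_potential_bound:
  fixes v :: "'x \<Rightarrow> 'i \<Rightarrow> real"
  assumes "finite X" "finite I" and norm: "\<And>x. x \<in> X \<Longrightarrow> (\<Sum>i\<in>I. v x i ^ 2) = c"
  shows "(3 * c ^ 2 * real (card X)) ^ 2 \<le>
    (\<Sum>x\<in>X. \<Sum>y\<in>X. (\<Sum>i\<in>I. v x i * v y i) ^ 4) * (3 * real (card I) ^ 2 + 6 * real (card I))"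
proof -
  define P where "P = I \<times> I \<times> I \<times> I"
  define t where "t x = (\<lambda>(i, j, k, l). v x i * v x j * v x k * v x l)" for x
  define T where "T p = (\<Sum>x\<in>X. t x p)" for p
  have "(\<Sum>p\<in>P. T p * iso_tensor p) = (\<Sum>x\<in>X. \<Sum>p\<in>P. t x p * iso_tensor p)"
    unfolding T_def sum_distrib_right by (rule sum.swap)
  also have "\<dots> = (\<Sum>x\<in>X. 3 * c ^ 2)"
    using assms(2) by (intro sum.cong refl) (simp add: P_def t_def norm sum_rank_one_mult_iso_tensor)
  finally have TD: "(\<Sum>p\<in>P. T p * iso_tensor p) = 3 * c ^ 2 * real (card X)"
    by simp
  have "(\<Sum>p\<in>P. T p ^ 2) = (\<Sum>p\<in>P. \<Sum>x\<in>X. \<Sum>y\<in>X. t x p * t y p)"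
    unfolding T_def power2_eq_square sum_product ..
  also have "\<dots> = (\<Sum>x\<in>X. \<Sum>y\<in>X. \<Sum>p\<in>P. t x p * t y p)"
    by (simp add: sum.swap[of _ P])
  also have "\<dots> = (\<Sum>x\<in>X. \<Sum>y\<in>X. (\<Sum>i\<in>I. v x i * v y i) ^ 4)"
    by (simp add: P_def t_def power4_sum_mult split_def)
  finally have TT: "(\<Sum>p\<in>P. T p ^ 2) = (\<Sum>x\<in>X. \<Sum>y\<in>X. (\<Sum>i\<in>I. v x i * v y i) ^ 4)" .
  have DD: "(\<Sum>p\<in>P. iso_tensor p ^ 2) = 3 * real (card I) ^ 2 + 6 * real (card I)"
    unfolding P_def using assms(2) by (rule sum_iso_tensor_squared)
  show ?thesis
    using Cauchy_Schwarz_ineq_sum[of T iso_tensor P] unfolding TD TT DD .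
qed

section \<open>Weighing matrices\<close>

lemma index_mult_transpose_mat:
  assumes "A \<in> carrier_mat m l" "B \<in> carrier_mat m' l" "i < m" "j < m'"
  shows "(A * transpose_mat B) $$ (i, j) = (\<Sum>t<l. A $$ (i, t) * B $$ (j, t))"
  using assms by (simp add: scalar_prod_def lessThan_atLeast0)

lemma smult_smult_mat: "a \<cdot>\<^sub>m (b \<cdot>\<^sub>m A) = (a * b :: 'a :: semigroup_mult) \<cdot>\<^sub>m A"
  by (rule eq_matI) (auto simp: mult.assoc)

lemma one_smult_mat: "(1 :: 'a :: monoid_mult) \<cdot>\<^sub>m A = A"
  by (rule eq_matI) auto

lemma transpose_smult_mat: "transpose_mat (a \<cdot>\<^sub>m A) = a \<cdot>\<^sub>m transpose_mat A"
  by (rule eq_matI) auto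

lemma smult_mult_transpose_smult:
  fixes P :: "'a :: comm_ring_1 mat"
  assumes "P \<in> carrier_mat n n"
  shows "(c \<cdot>\<^sub>m P) * transpose_mat (c \<cdot>\<^sub>m P) = (c * c) \<cdot>\<^sub>m (P * transpose_mat P)"
  using assms by (simp add: transpose_smult_mat mult_smult_assoc_mat[of _ n n _ n]
      mult_smult_distrib[of _ n n _ n] smult_smult_mat)

lemma scalar_identity_mult_transpose:
  fixes A :: "'a :: field mat"
  assumes "A \<in> carrier_mat n n" "c \<noteq> 0"
  shows "(1 / c) \<cdot>\<^sub>m ((c \<cdot>\<^sub>m 1\<^sub>m n) * transpose_mat A) = transpose_mat A"
    "(1 / c) \<cdot>\<^sub>m (A * transpose_mat (c \<cdot>\<^sub>m 1\<^sub>m n)) = A"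
    "(c \<cdot>\<^sub>m 1\<^sub>m n) * transpose_mat (c \<cdot>\<^sub>m 1\<^sub>m n) = (c * c) \<cdot>\<^sub>m 1\<^sub>m n"
  using assms
  by (simp_all add: transpose_smult_mat mult_smult_assoc_mat[of _ n n _ n] mult_smult_distrib[of _ n n _ n]
      smult_smult_mat one_smult_mat)

lemma transpose_mult_scalar_identity:
  fixes W :: "'a :: field mat"
  assumes W: "W \<in> carrier_mat n n" and WW: "W * transpose_mat W = c \<cdot>\<^sub>m 1\<^sub>m n" and "c \<noteq> 0"
  shows "transpose_mat W * W = c \<cdot>\<^sub>m 1\<^sub>m n"
proof -
  have Wt: "transpose_mat W \<in> carrier_mat n n"
    using W by simp
  have "((1 / c) \<cdot>\<^sub>m W) * transpose_mat W = (1 / c) \<cdot>\<^sub>m (c \<cdot>\<^sub>m 1\<^sub>m n)"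
    unfolding mult_smult_assoc_mat[OF W Wt] WW ..
  also have "\<dots> = 1\<^sub>m n"
    using \<open>c \<noteq> 0\<close> by (simp add: smult_smult_mat one_smult_mat)
  finally have "((1 / c) \<cdot>\<^sub>m W) * transpose_mat W = 1\<^sub>m n" .
  then have "transpose_mat W * ((1 / c) \<cdot>\<^sub>m W) = 1\<^sub>m n"
    using W by (intro mat_mult_left_right_inverse[OF _ Wt]) simp_all
  then have "(1 / c) \<cdot>\<^sub>m (transpose_mat W * W) = 1\<^sub>m n"
    unfolding mult_smult_distrib[OF Wt W] .
  then have "c \<cdot>\<^sub>m ((1 / c) \<cdot>\<^sub>m (transpose_mat W * W)) = c \<cdot>\<^sub>m 1\<^sub>m n"
    by (rule arg_cong)
  then show ?thesis
    using \<open>c \<noteq> 0\<close> by (simp add: smult_smult_mat one_smult_mat)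
qed

lemma weighing_matrixD:
  assumes "weighing_matrix n k W"
  shows "W \<in> carrier_mat n n" "\<And>i j. i < n \<Longrightarrow> j < n \<Longrightarrow> W $$ (i, j) \<in> {1, -1, 0}"
    "W * transpose_mat W = real k \<cdot>\<^sub>m 1\<^sub>m n"
  using assms unfolding weighing_matrix_def by auto

lemma weighing_matrix_transpose:
  assumes "weighing_matrix n k W" "k > 0"
  shows "weighing_matrix n k (transpose_mat W)"
proof -
  note W = weighing_matrixD[OF assms(1)]
  have "transpose_mat W * transpose_mat (transpose_mat W) = real k \<cdot>\<^sub>m 1\<^sub>m n"
    using transpose_mult_scalar_identity[OF W(1,3)] assms(2) by simp
  then show ?thesis
    using W(1,2) unfolding weighing_matrix_def by simp
qed

lemma sign_power4: "x \<in> {1, -1, 0} \<Longrightarrow> (x :: real) ^ 4 = x * x"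
  by auto

lemma sum_power4_weighing_matrix:
  assumes "weighing_matrix n k W"
  shows "(\<Sum>r<n. \<Sum>s<n. W $$ (r, s) ^ 4) = real k * real n"
proof -
  note W = weighing_matrixD[OF assms]
  have "(\<Sum>r<n. \<Sum>s<n. W $$ (r, s) ^ 4) = (\<Sum>r<n. \<Sum>s<n. W $$ (r, s) * W $$ (r, s))"
    using W(2) by (intro sum.cong refl) (simp add: sign_power4)
  also have "\<dots> = (\<Sum>r<n. (W * transpose_mat W) $$ (r, r))"
    using W(1) by (intro sum.cong refl, subst index_mult_transpose_mat) auto
  also have "\<dots> = real k * real n"
    using W(3) by simp
  finally show ?thesis .
qed

lemma weighing_matrix_gram_mult_transpose:
  assumes W1: "weighing_matrix n k W1" and W2: "weighing_matrix n k W2" and "k > 0"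
  shows "(W1 * transpose_mat W2) * transpose_mat (W1 * transpose_mat W2) = (real k * real k) \<cdot>\<^sub>m 1\<^sub>m n"
proof -
  note W1 = weighing_matrixD[OF W1] and W2 = weighing_matrixD[OF W2]
  have "(W1 * transpose_mat W2) * transpose_mat (W1 * transpose_mat W2)
      = W1 * (transpose_mat W2 * W2) * transpose_mat W1"
    using W1(1) W2(1) by (simp add: transpose_mult[of _ n n] assoc_mult_mat[of _ n n _ n _ n])
  also have "\<dots> = real k \<cdot>\<^sub>m (W1 * transpose_mat W1)"
    using W1(1) \<open>k > 0\<close>
    by (simp add: transpose_mult_scalar_identity[OF W2(1,3)] mult_smult_distrib[of W1 n n "1\<^sub>m n" n]
        mult_smult_assoc_mat[of W1 n n "transpose_mat W1" n])
  also have "\<dots> = (real k * real k) \<cdot>\<^sub>m 1\<^sub>m n"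
    by (simp add: W1(3) smult_smult_mat)
  finally show ?thesis .
qed

lemma unbiasedI:
  assumes W1: "weighing_matrix n k W1" and W2: "weighing_matrix n k W2" and "k > 0"
    and entries: "\<And>i j. i < n \<Longrightarrow> j < n \<Longrightarrow>
      ((1 / sqrt (real k)) \<cdot>\<^sub>m (W1 * transpose_mat W2)) $$ (i, j) \<in> {1, -1, 0}"
  shows "unbiased n k W1 W2"
proof -
  have P: "W1 * transpose_mat W2 \<in> carrier_mat n n"
    using weighing_matrixD(1)[OF W1] weighing_matrixD(1)[OF W2] by simp
  have "(1 / sqrt (real k) * (1 / sqrt (real k))) * (real k * real k) = real k"
    using \<open>k > 0\<close> by (simp add: field_simps)
  then have "((1 / sqrt (real k)) \<cdot>\<^sub>m (W1 * transpose_mat W2))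
      * transpose_mat ((1 / sqrt (real k)) \<cdot>\<^sub>m (W1 * transpose_mat W2)) = real k \<cdot>\<^sub>m 1\<^sub>m n"
    by (simp add: smult_mult_transpose_smult[OF P] weighing_matrix_gram_mult_transpose[OF W1 W2 \<open>k > 0\<close>]
        smult_smult_mat)
  then show ?thesis
    using W1 W2 P entries unfolding unbiased_def weighing_matrix_def by simp
qed

section \<open>The upper bound\<close>

lemma sum_power4_mult_transpose:
  fixes M N :: "real mat"
  assumes "k > 0" and M: "M \<in> carrier_mat n n" "M * transpose_mat M = real k \<cdot>\<^sub>m 1\<^sub>m n"
    and unb: "M \<noteq> N \<Longrightarrow> weighing_matrix n k ((1 / sqrt (real k)) \<cdot>\<^sub>m (M * transpose_mat N))"
    and N: "N \<in> carrier_mat n n"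
  shows "(\<Sum>r<n. \<Sum>s<n. (M * transpose_mat N) $$ (r, s) ^ 4) =
    (if M = N then real k ^ 4 * real n else real k ^ 3 * real n)"
proof (cases "M = N")
  case True
  have "(\<Sum>r<n. \<Sum>s<n. (M * transpose_mat M) $$ (r, s) ^ 4) = (\<Sum>r<n. \<Sum>s<n. if r = s then real k ^ 4 else 0)"
    using M(2) by (intro sum.cong refl) simp
  then show ?thesis
    using True by simp
next
  case False
  define U where "U = (1 / sqrt (real k)) \<cdot>\<^sub>m (M * transpose_mat N)"
  have entry: "(M * transpose_mat N) $$ (r, s) = sqrt (real k) * U $$ (r, s)" if "r < n" "s < n" for r s
    using that M(1) N \<open>k > 0\<close> by (simp add: U_def)
  have "(\<Sum>r<n. \<Sum>s<n. (M * transpose_mat N) $$ (r, s) ^ 4) = real k ^ 2 * (\<Sum>r<n. \<Sum>s<n. U $$ (r, s) ^ 4)"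
  proof -
    have "sqrt (real k) ^ 4 = real k ^ 2"
      using power_mult[of "sqrt (real k)" 2 2] by simp
    then show ?thesis
      by (simp add: entry power_mult_distrib sum_distrib_left)
  qed
  also have "\<dots> = real k ^ 3 * real n"
    using sum_power4_weighing_matrix[OF unb[OF False, folded U_def]] by (simp add: power_def)
  finally show ?thesis
    using False by simp
qed

lemma sum_if_eq_card:
  fixes P R :: real
  assumes "finite B" "a \<in> B"
  shows "(\<Sum>b\<in>B. if a = b then P else R) = P + (real (card B) - 1) * R"
proof -
  have "(\<Sum>b\<in>B. if a = b then P else R) = (\<Sum>b\<in>B. R + (if a = b then P - R else 0))"
    by (rule sum.cong) auto
  also have "\<dots> = real (card B) * R + (P - R)"
    using assms by (simp add: sum.distrib)
  finally show ?thesis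
    by (simp add: algebra_simps)
qed

lemma sum_power4_inner_rows:
  fixes B :: "real mat set"
  assumes "finite B" "k > 0"
    and gram: "\<And>M. M \<in> B \<Longrightarrow> M \<in> carrier_mat n n \<and> M * transpose_mat M = real k \<cdot>\<^sub>m 1\<^sub>m n"
    and unb: "\<And>M N. M \<in> B \<Longrightarrow> N \<in> B \<Longrightarrow> M \<noteq> N \<Longrightarrow>
      weighing_matrix n k ((1 / sqrt (real k)) \<cdot>\<^sub>m (M * transpose_mat N))"
  shows "(\<Sum>x\<in>B \<times> {..<n}. \<Sum>y\<in>B \<times> {..<n}. (\<Sum>i<n. fst x $$ (snd x, i) * fst y $$ (snd y, i)) ^ 4)
    = real (card B) * real n * real k ^ 3 * (real k + real (card B) - 1)"
proof -
  have inner: "(\<Sum>i<n. M $$ (r, i) * N $$ (s, i)) = (M * transpose_mat N) $$ (r, s)"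
    if "M \<in> B" "N \<in> B" "r < n" "s < n" for M N r s
    using that gram[OF that(1)] gram[OF that(2)] by (subst index_mult_transpose_mat[of _ n n]) auto
  have "(\<Sum>x\<in>B \<times> {..<n}. \<Sum>y\<in>B \<times> {..<n}. (\<Sum>i<n. fst x $$ (snd x, i) * fst y $$ (snd y, i)) ^ 4)
      = (\<Sum>M\<in>B. \<Sum>r<n. \<Sum>N\<in>B. \<Sum>s<n. (M * transpose_mat N) $$ (r, s) ^ 4)"
    unfolding sum.cartesian_product' by (intro sum.cong refl) (simp add: inner)
  also have "\<dots> = (\<Sum>M\<in>B. \<Sum>N\<in>B. \<Sum>r<n. \<Sum>s<n. (M * transpose_mat N) $$ (r, s) ^ 4)"
    by (intro sum.cong refl) (rule sum.swap)
  also have "\<dots> = (\<Sum>M\<in>B. \<Sum>N\<in>B. if M = N then real k ^ 4 * real n else real k ^ 3 * real n)"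
    using gram unb \<open>k > 0\<close> by (intro sum.cong refl sum_power4_mult_transpose) auto
  also have "\<dots> = real (card B) * real n * real k ^ 3 * (real k + real (card B) - 1)"
    using \<open>finite B\<close> by (simp add: sum_if_eq_card algebra_simps eval_nat_numeral)
  finally show ?thesis .
qed

theorem unbiased_family_card_bound:
  fixes B :: "real mat set"
  assumes "finite B" "n > 0" "k > 0"
    and gram: "\<And>M. M \<in> B \<Longrightarrow> M \<in> carrier_mat n n \<and> M * transpose_mat M = real k \<cdot>\<^sub>m 1\<^sub>m n"
    and unb: "\<And>M N. M \<in> B \<Longrightarrow> N \<in> B \<Longrightarrow> M \<noteq> N \<Longrightarrow>
      weighing_matrix n k ((1 / sqrt (real k)) \<cdot>\<^sub>m (M * transpose_mat N))"
  shows "3 * k * card B \<le> (k + card B - 1) * (n + 2)"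
proof (cases "B = {}")
  case False
  define X where "X = B \<times> {..<n}"
  define v where "v x i = fst x $$ (snd x, i)" for x :: "real mat \<times> nat" and i
  have norm: "(\<Sum>i<n. v x i ^ 2) = real k" if x: "x \<in> X" for x
  proof -
    obtain M r where "x = (M, r)" "M \<in> B" "r < n"
      using x unfolding X_def by blast
    then show ?thesis
      using gram[of M] index_mult_transpose_mat[of M n n M n r r] by (simp add: v_def power2_eq_square)
  qed
  have quartic: "(3 * real k ^ 2 * real (card X)) ^ 2
      \<le> (\<Sum>x\<in>X. \<Sum>y\<in>X. (\<Sum>i<n. v x i * v y i) ^ 4) * (3 * real n ^ 2 + 6 * real n)"
    using quartic_frame_potential_bound[of X "{..<n}" v "real k"] \<open>finite B\<close> norm by (simp add: X_def)
  define P where "P = 3 * real k ^ 3 * real (card B) * real n ^ 2"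
  have "(3 * real k * real (card B)) * P = (3 * real k ^ 2 * real (card X)) ^ 2"
    by (simp add: P_def X_def card_cartesian_product power2_eq_square eval_nat_numeral mult_ac)
  also have "\<dots> \<le> (\<Sum>x\<in>X. \<Sum>y\<in>X. (\<Sum>i<n. v x i * v y i) ^ 4) * (3 * real n ^ 2 + 6 * real n)"
    by (rule quartic)
  also have "\<dots> = ((real k + real (card B) - 1) * (real n + 2)) * P"
  proof -
    have pot: "(\<Sum>x\<in>X. \<Sum>y\<in>X. (\<Sum>i<n. v x i * v y i) ^ 4)
        = real (card B) * real n * real k ^ 3 * (real k + real (card B) - 1)"
      unfolding X_def v_def using assms(1,3) gram unb by (rule sum_power4_inner_rows)
    show ?thesis
      unfolding pot by (simp add: P_def power2_eq_square eval_nat_numeral algebra_simps)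
  qed
  finally have "(3 * real k * real (card B)) * P \<le> ((real k + real (card B) - 1) * (real n + 2)) * P" .
  moreover have "0 < P"
    using assms(1-3) False by (simp add: P_def card_gt_0_iff)
  ultimately have "3 * real k * real (card B) \<le> (real k + real (card B) - 1) * (real n + 2)"
    by (rule mult_right_le_imp_le)
  moreover have "real (k + card B - 1) = real k + real (card B) - 1"
    using \<open>k > 0\<close> by (simp add: of_nat_diff)
  ultimately have "real (3 * k * card B) \<le> real (k + card B - 1) * real (n + 2)"
    by (simp add: add.commute)
  then show ?thesis
    by (metis of_nat_le_iff of_nat_mult)
qed simp

theorem mutually_unbiased_card_bound:
  assumes "finite S" "mutually_unbiased n k S" "n > 0" "k > 1"
  shows "3 * k * (card S + 1) \<le> (k + card S) * (n + 2)"
proof -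
  define D where "D = sqrt (real k) \<cdot>\<^sub>m (1\<^sub>m n :: real mat)"
  have sqrt_k: "sqrt (real k) \<noteq> 0" "sqrt (real k) * sqrt (real k) = real k"
    using \<open>k > 1\<close> by simp_all
  have W: "weighing_matrix n k W" if "W \<in> S" for W
    using assms(2) that unfolding mutually_unbiased_def by blast
  have "D \<notin> S" \<comment> \<open>this is where \<open>k > 1\<close> is needed: for \<open>k = 1\<close>, \<open>D = I\<close> may lie in \<open>S\<close>\<close>
  proof
    assume "D \<in> S"
    then have "D $$ (0, 0) \<in> {1, -1, 0}"
      using weighing_matrixD(2)[OF W] \<open>n > 0\<close> by blast
    moreover have "D $$ (0, 0) > 1"
      using \<open>n > 0\<close> \<open>k > 1\<close> by (simp add: D_def)
    ultimately show False
      by auto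
  qed
  have "3 * k * card (insert D S) \<le> (k + card (insert D S) - 1) * (n + 2)"
  proof (rule unbiased_family_card_bound)
    fix M assume "M \<in> insert D S"
    then show "M \<in> carrier_mat n n \<and> M * transpose_mat M = real k \<cdot>\<^sub>m 1\<^sub>m n"
      using weighing_matrixD(1,3)[OF W] scalar_identity_mult_transpose(3) sqrt_k
      by (auto simp: D_def)
  next
    fix M N assume "M \<in> insert D S" "N \<in> insert D S" "M \<noteq> N"
    then consider "M \<in> S" "N \<in> S" | "M = D" "N \<in> S" | "M \<in> S" "N = D"
      by auto
    then show "weighing_matrix n k ((1 / sqrt (real k)) \<cdot>\<^sub>m (M * transpose_mat N))"
    proof cases
      case 1
      then show ?thesis
        using assms(2) \<open>M \<noteq> N\<close> unfolding mutually_unbiased_def unbiased_def by blast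
    next
      case 2
      then show ?thesis
        using weighing_matrixD(1)[OF W] weighing_matrix_transpose[OF W] \<open>k > 1\<close>
        by (simp add: D_def scalar_identity_mult_transpose(1) sqrt_k)
    next
      case 3
      have "(1 / sqrt (real k)) \<cdot>\<^sub>m (M * transpose_mat D) = M"
        unfolding D_def by (rule scalar_identity_mult_transpose(2)[OF weighing_matrixD(1)[OF W[OF 3(1)]] sqrt_k(1)])
      then show ?thesis
        using 3 W by simp
    qed
  qed (use assms in auto)
  then show ?thesis
    using \<open>finite S\<close> \<open>D \<notin> S\<close> by simp
qed

section \<open>Explicit sets of mutually unbiased weighing matrices\<close>

definition mat_of_int_rows :: "nat \<Rightarrow> int list list \<Rightarrow> real mat" where
  "mat_of_int_rows n M = mat n n (\<lambda>(i, j). real_of_int (M ! i ! j))"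

definition square_rows :: "nat \<Rightarrow> int list list \<Rightarrow> bool" where
  "square_rows n M \<longleftrightarrow> length M = n \<and> (\<forall>r\<in>set M. length r = n)"

definition int_gram :: "int list list \<Rightarrow> int list list \<Rightarrow> int list list" where
  "int_gram A B = map (\<lambda>r. map (\<lambda>s. sum_list (map2 (*) r s)) B) A"

lemma length_int_gram [simp]:
  "length (int_gram A B) = length A" "i < length A \<Longrightarrow> length (int_gram A B ! i) = length B"
  by (simp_all add: int_gram_def)

lemma mat_of_int_rows_mult_transpose:
  assumes "square_rows n A" "square_rows n B"
  shows "mat_of_int_rows n A * transpose_mat (mat_of_int_rows n B) = mat_of_int_rows n (int_gram A B)"
proof (rule eq_matI)
  fix i j assume "i < dim_row (mat_of_int_rows n (int_gram A B))" "j < dim_col (mat_of_int_rows n (int_gram A B))"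
  then have ij: "i < n" "j < n"
    by (simp_all add: mat_of_int_rows_def)
  have len: "length (A ! i) = n" "length (B ! j) = n" "length A = n" "length B = n"
    using assms ij by (auto simp: square_rows_def)
  have "(mat_of_int_rows n A * transpose_mat (mat_of_int_rows n B)) $$ (i, j)
      = (\<Sum>t<n. real_of_int (A ! i ! t * B ! j ! t))"
    using ij by (subst index_mult_transpose_mat[of _ n n]) (auto simp: mat_of_int_rows_def)
  also have "\<dots> = real_of_int (sum_list (map2 (*) (A ! i) (B ! j)))"
    using len by (simp add: sum_list_sum_nth lessThan_atLeast0)
  finally show "(mat_of_int_rows n A * transpose_mat (mat_of_int_rows n B)) $$ (i, j)
      = mat_of_int_rows n (int_gram A B) $$ (i, j)"
    using ij len by (simp add: mat_of_int_rows_def int_gram_def)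
qed (simp_all add: mat_of_int_rows_def)

definition weighing_rows :: "nat \<Rightarrow> nat \<Rightarrow> int list list \<Rightarrow> bool" where
  "weighing_rows n k M \<longleftrightarrow> square_rows n M \<and> (\<forall>r\<in>set M. set r \<subseteq> {1, -1, 0}) \<and>
     int_gram M M = map (\<lambda>i. map (\<lambda>j. if i = j then int k else 0) [0..<n]) [0..<n]"

lemma weighing_matrix_of_int_rows:
  assumes "weighing_rows n k M"
  shows "weighing_matrix n k (mat_of_int_rows n M)"
proof -
  have sq: "square_rows n M" and sign: "\<forall>r\<in>set M. set r \<subseteq> {1, -1, 0}"
    and gram: "int_gram M M = map (\<lambda>i. map (\<lambda>j. if i = j then int k else 0) [0..<n]) [0..<n]"
    using assms by (simp_all add: weighing_rows_def)
  have "mat_of_int_rows n M $$ (i, j) \<in> {1, -1, 0}" if "i < n" "j < n" for i j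
  proof -
    have "M ! i ! j \<in> {1, -1, 0}"
      using sq sign that unfolding square_rows_def by (metis nth_mem subsetD)
    then show ?thesis
      using that by (auto simp: mat_of_int_rows_def)
  qed
  moreover have "mat_of_int_rows n M * transpose_mat (mat_of_int_rows n M) = real k \<cdot>\<^sub>m 1\<^sub>m n"
    unfolding mat_of_int_rows_mult_transpose[OF sq sq] gram
    by (rule eq_matI) (auto simp: mat_of_int_rows_def)
  ultimately show ?thesis
    unfolding weighing_matrix_def by (simp add: mat_of_int_rows_def)
qed

lemma inj_on_mat_of_int_rows: "inj_on (mat_of_int_rows n) {M. square_rows n M}"
proof (rule inj_onI)
  fix A B assume A: "A \<in> {M. square_rows n M}" and B: "B \<in> {M. square_rows n M}"
    and eq: "mat_of_int_rows n A = mat_of_int_rows n B"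
  have "A ! i ! j = B ! i ! j" if "i < n" "j < n" for i j
    using arg_cong[OF eq, of "\<lambda>W. W $$ (i, j)"] that by (simp add: mat_of_int_rows_def)
  then show "A = B"
    using A B unfolding square_rows_def by (auto intro!: nth_equalityI)
qed

definition mutually_unbiased_rows :: "nat \<Rightarrow> nat \<Rightarrow> int list list list \<Rightarrow> bool" where
  "mutually_unbiased_rows n d Ms \<longleftrightarrow> distinct Ms \<and> (\<forall>M\<in>set Ms. weighing_rows n (d ^ 2) M) \<and>
     (\<forall>A\<in>set Ms. \<forall>B\<in>set Ms. A \<noteq> B \<longrightarrow> (\<forall>r\<in>set (int_gram A B). set r \<subseteq> {int d, - int d, 0}))"

lemma mutually_unbiased_of_int_rows:
  assumes "mutually_unbiased_rows n d Ms" "d > 0"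
  shows "mutually_unbiased n (d ^ 2) (mat_of_int_rows n ` set Ms)"
    "card (mat_of_int_rows n ` set Ms) = length Ms"
proof -
  have weighing: "weighing_rows n (d ^ 2) M" if "M \<in> set Ms" for M
    using assms(1) that by (simp add: mutually_unbiased_rows_def)
  then have sq: "square_rows n M" if "M \<in> set Ms" for M
    using that by (simp add: weighing_rows_def)
  have "unbiased n (d ^ 2) (mat_of_int_rows n A) (mat_of_int_rows n B)"
    if "A \<in> set Ms" "B \<in> set Ms" "A \<noteq> B" for A B
  proof (rule unbiasedI)
    fix i j assume ij: "i < n" "j < n"
    have "int_gram A B ! i \<in> set (int_gram A B)" "int_gram A B ! i ! j \<in> set (int_gram A B ! i)"
      using ij sq[OF that(1)] sq[OF that(2)] by (simp_all add: square_rows_def)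
    then have "int_gram A B ! i ! j \<in> {int d, - int d, 0}"
      using assms(1) that unfolding mutually_unbiased_rows_def by blast
    then show "((1 / sqrt (real (d ^ 2))) \<cdot>\<^sub>m (mat_of_int_rows n A * transpose_mat (mat_of_int_rows n B))) $$ (i, j)
        \<in> {1, -1, 0}"
      using ij \<open>d > 0\<close>
      unfolding mat_of_int_rows_mult_transpose[OF sq[OF that(1)] sq[OF that(2)]]
      by (auto simp: mat_of_int_rows_def)
  qed (use weighing weighing_matrix_of_int_rows that \<open>d > 0\<close> in auto)
  then show "mutually_unbiased n (d ^ 2) (mat_of_int_rows n ` set Ms)"
    unfolding mutually_unbiased_def using weighing weighing_matrix_of_int_rows by auto
  have "inj_on (mat_of_int_rows n) (set Ms)"
    using inj_on_subset[OF inj_on_mat_of_int_rows] sq by blast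
  then show "card (mat_of_int_rows n ` set Ms) = length Ms"
    using assms(1) by (simp add: card_image distinct_card mutually_unbiased_rows_def)
qed

lemma W_max_between:
  assumes upper: "\<And>S. finite S \<Longrightarrow> mutually_unbiased n k S \<Longrightarrow> card S \<le> h"
    and "finite S\<^sub>0" "mutually_unbiased n k S\<^sub>0"
  shows "W_max n k \<in> {card S\<^sub>0..h}"
proof -
  define C where "C = {card S | S. finite S \<and> mutually_unbiased n k S}"
  have "C \<subseteq> {..h}"
    using upper by (auto simp: C_def)
  then have "finite C"
    by (rule finite_subset) simp
  moreover have "card S\<^sub>0 \<in> C"
    using assms(2,3) by (auto simp: C_def)
  ultimately have "card S\<^sub>0 \<le> Max C" "Max C \<in> C"
    by (auto intro: Max_ge Max_in)
  then show ?thesis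
    using \<open>C \<subseteq> {..h}\<close> unfolding W_max_def C_def[symmetric] by auto
qed

lemma W_max_between_certificate:
  assumes "mutually_unbiased_rows n d Ms" "n > 0" "d > 1"
    and "\<And>c. 3 * d ^ 2 * (c + 1) \<le> (d ^ 2 + c) * (n + 2) \<Longrightarrow> c \<le> h"
  shows "W_max n (d ^ 2) \<in> {length Ms..h}"
proof -
  have "W_max n (d ^ 2) \<in> {card (mat_of_int_rows n ` set Ms)..h}"
  proof (rule W_max_between)
    fix S assume "finite S" "mutually_unbiased n (d ^ 2) S"
    moreover have "d ^ 2 > 1"
      using less_1_mult[OF \<open>d > 1\<close> \<open>d > 1\<close>] by (simp add: power2_eq_square)
    ultimately show "card S \<le> h"
      using mutually_unbiased_card_bound[of S n "d ^ 2"] assms(2,4) by simp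
  qed (use mutually_unbiased_of_int_rows(1)[OF assms(1)] \<open>d > 1\<close> in auto)
  then show ?thesis
    using mutually_unbiased_of_int_rows(2)[OF assms(1)] \<open>d > 1\<close> by simp
qed

definition certificate_17 :: "int list list list" where
  "certificate_17 =
    [[[ 1,  0,  1,  0,  0,  0,  1,  0,  0,  0,  1, -1,  1, -1, -1,  0,  1],
      [ 1,  0, -1, -1,  1,  0,  0, -1,  0,  0, -1,  0, -1, -1,  0,  0,  1],
      [ 1,  1, -1,  1,  0, -1,  0,  1,  0,  0,  0,  0,  0, -1,  0, -1, -1],
      [ 1,  1,  0,  0, -1,  0,  0,  0, -1,  1,  0,  0, -1,  1, -1,  1,  0],
      [ 0,  0,  0,  0,  1,  1,  1,  1,  0, -1, -1,  0,  0,  0, -1,  1, -1],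
      [ 1, -1,  0,  0,  1, -1, -1,  0,  0,  0,  0,  1,  1,  1, -1,  0,  0],
      [ 1,  0,  1, -1,  0,  1,  0,  1, -1,  0,  0,  1,  0,  0,  1, -1,  0],
      [ 0,  1,  0,  0,  0,  1, -1,  0,  1,  1,  0,  1,  1, -1,  0,  1,  0],
      [ 1, -1,  0,  0,  0,  1, -1,  0,  1,  0,  1, -1, -1,  0,  0,  0, -1],
      [ 0,  0,  0,  1, -1,  1, -1,  0,  0, -1, -1,  0,  0,  0, -1, -1,  1],
      [ 0,  1, -1, -1,  0,  0,  0,  1,  1, -1,  1,  0,  0,  1,  0,  0,  1],
      [ 0,  1,  1,  1,  1,  0,  0, -1,  0, -1,  1,  1, -1,  0,  0,  0,  0],
      [ 1,  0, -1,  1,  0,  1,  1, -1,  0,  0,  0,  0,  1,  1,  1,  0,  0],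
      [ 0,  1,  0, -1,  0,  0, -1, -1, -1, -1,  0, -1,  1,  0,  0,  0, -1],
      [ 0,  1,  1,  0,  1,  0,  0,  0,  1,  1, -1, -1,  0,  1,  0, -1,  0],
      [ 1,  0,  1,  0, -1, -1,  0,  0,  1, -1, -1,  0,  0,  0,  1,  1,  0],
      [ 0,  0,  0,  1,  1,  0, -1,  1, -1,  0,  0, -1,  0,  0,  1,  1,  1]],

     [[ 1, -1,  0, -1,  0,  1,  0, -1,  0,  1, -1,  1,  1,  0,  0,  0,  0],
      [ 0,  1,  1, -1,  1, -1,  0,  0,  0,  0, -1,  1, -1,  0,  1,  0,  0],
      [ 0,  0,  1,  1,  0,  1, -1,  0,  1,  0, -1, -1,  0, -1,  1,  0,  0],
      [ 1, -1,  1,  0,  0, -1,  0, -1,  1, -1,  1,  0,  0,  0,  0, -1,  0],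
      [ 1,  0, -1,  1,  1,  0, -1, -1,  0,  0,  0,  0, -1,  1,  0,  1,  0],
      [ 1,  0,  0,  1, -1,  0,  1,  0, -1,  1,  0,  0, -1,  0,  1, -1,  0],
      [ 0,  1, -1,  0,  1,  0,  0,  0,  1,  1,  1,  0,  1,  0,  1, -1,  0],
      [ 1,  1,  0,  0,  1,  1,  0,  0, -1, -1,  0,  0,  0, -1, -1, -1,  0],
      [ 0,  1, -1,  0, -1,  0,  1, -1,  1, -1, -1,  0,  0,  0,  0,  0,  1],
      [ 0,  1,  1,  0, -1,  1, -1,  0,  0,  0,  1,  1,  0,  1,  0,  0,  1],
      [ 1,  0, -1, -1, -1,  0, -1,  1,  0, -1,  0,  0,  0,  0,  1,  0, -1],
      [ 1,  0,  0, -1,  0,  0,  0,  1,  1,  1,  0, -1, -1,  0, -1,  0,  1],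
      [ 0,  1,  0,  0, -1, -1, -1, -1,  0,  1,  0,  0,  0, -1, -1,  0, -1],
      [ 1,  1,  1,  0,  0,  0,  1,  0,  0,  0,  0, -1,  1,  1,  0,  1, -1],
      [ 1,  0,  0,  1,  0, -1,  0,  1,  0,  0,  0,  1,  1, -1,  0,  1,  1],
      [ 0,  0,  0,  0,  0,  1,  1,  0,  1,  0,  1,  1, -1, -1,  0,  1, -1],
      [ 0,  0,  0,  1,  0,  0,  0,  1,  1,  0, -1,  1,  0,  1, -1, -1, -1]],

     [[ 1,  0, -1,  0,  1,  0, -1,  0,  1, -1,  1,  1,  0, -1,  0,  0,  0],
      [ 0,  0,  1,  0, -1,  0, -1, -1,  1,  0,  1, -1,  1,  0,  0,  1,  0],
      [ 1,  0,  1, -1,  0,  0, -1,  0,  0, -1, -1, -1, -1,  0,  0, -1,  0],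
      [ 1,  0,  0,  0,  1, -1,  0, -1, -1,  0, -1,  0,  1,  0,  1,  1,  0],
      [ 1,  0, -1,  1, -1, -1,  0, -1,  0,  0,  0,  0,  0,  1, -1, -1,  0],
      [ 0,  1,  1,  0,  0, -1,  0,  1,  0, -1,  0,  1,  0,  1, -1,  1,  0],
      [ 0,  1,  0,  1,  0,  1,  0, -1,  0,  0, -1,  0, -1, -1, -1,  1,  0],
      [ 1, -1,  0,  0, -1,  1,  0,  0,  0,  0,  0,  1, -1,  1,  1,  1,  0],
      [ 1,  1,  0, -1, -1,  0,  1,  0, -1,  0,  1,  0,  0, -1,  0,  0, -1],
      [ 0,  0,  0,  1,  1,  1,  0,  0, -1, -1,  1, -1,  0,  1,  0,  0, -1],
      [ 0,  1, -1, -1,  0,  1,  0,  0,  1,  0, -1,  0,  1,  1,  0,  0, -1],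
      [ 0,  1,  0, -1,  1,  0,  0, -1,  0,  1,  1,  0, -1,  1,  0,  0,  1],
      [ 1, -1,  1,  0,  1,  0,  1,  0,  1,  1,  0,  0,  0,  0, -1,  0, -1],
      [ 1,  1,  0,  1,  0,  0,  1,  1,  1,  0,  0, -1,  0,  0,  1,  0,  1],
      [ 1,  0,  0,  0,  0,  1, -1,  1, -1,  1,  0,  0,  1,  0, -1,  0,  1],
      [ 0,  0,  1,  0,  0,  1,  1, -1,  0, -1,  0,  1,  1,  0,  0, -1,  1],
      [ 0,  1,  1,  1,  0,  0, -1,  0,  0,  1,  0,  1,  0,  0,  1, -1, -1]],

     [[ 0,  1, -1,  0,  0,  0, -1, -1, -1,  1,  0,  1,  1,  1,  0,  0,  0],
      [ 1,  0,  0,  0, -1,  0, -1,  1,  0,  1,  1,  1, -1, -1,  0,  0,  0],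
      [ 0,  0,  0,  0,  0,  1,  1,  1, -1,  1,  1, -1,  1,  0,  1,  0,  0],
      [ 1,  0,  0,  0, -1,  1,  0, -1, -1, -1, -1,  0,  0, -1,  1,  0,  0],
      [ 1, -1,  0, -1,  1,  1,  0,  0, -1,  0,  0,  0, -1,  1, -1,  0,  0],
      [ 0,  1, -1,  0, -1,  0,  0,  1,  0,  0, -1, -1, -1,  1,  0, -1,  0],
      [ 1,  1, -1,  1,  0,  0,  1,  0,  0, -1,  1,  0,  0,  0, -1,  1,  0],
      [ 1,  1,  0, -1,  1,  0, -1,  0,  1,  0,  0, -1,  0,  0,  1,  1,  0],
      [ 0,  1,  1,  1,  1,  1,  0,  1,  0,  0, -1,  1,  0,  0,  0,  0,  1],
      [ 1,  0,  0, -1,  0, -1,  1,  1,  0,  0, -1,  1,  1,  0,  0,  0, -1],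
      [ 1,  0,  1,  0, -1,  0,  1, -1,  1,  1,  0,  0,  0,  1,  0,  0,  1],
      [ 0,  1,  1, -1,  0, -1,  0,  0, -1, -1,  1,  0,  0,  0,  0, -1,  1],
      [ 0,  1,  0,  0,  1,  0,  1, -1,  0,  1,  0,  0, -1, -1,  0, -1, -1],
      [ 1, -1, -1,  1,  1, -1,  0,  0,  0,  0,  0,  0,  0,  0,  1, -1,  1],
      [ 1,  0,  1,  1,  0,  0, -1,  0,  0,  0,  0, -1,  1,  0, -1, -1, -1],
      [ 0,  0,  0,  0,  0,  1,  0,  0,  1, -1,  1,  1,  0,  1,  1, -1, -1],
      [ 0,  0,  1,  1,  0, -1,  0,  0, -1,  0,  0,  0, -1,  1,  1,  1, -1]],

     [[ 1,  0, -1,  0, -1, -1,  1,  0,  1,  0,  1,  1,  0,  0,  1,  0,  0],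
      [ 1,  0, -1,  1,  1,  0,  0, -1,  0,  1,  0,  0,  1, -1, -1,  0,  0],
      [ 0,  1,  0,  0, -1,  0, -1,  1,  0, -1,  1,  0,  1, -1, -1,  0,  0],
      [ 0,  0,  1,  1, -1,  1,  1, -1, -1,  0,  1,  0,  0,  0,  0,  1,  0],
      [ 1,  0,  1,  1,  0, -1,  0,  0, -1, -1, -1,  1,  0,  0,  0, -1,  0],
      [ 1,  0,  1,  1,  0,  0, -1,  1,  1,  1,  0,  0,  0,  1,  0,  1,  0],
      [ 1,  0,  0,  0,  0,  1,  1,  0,  1, -1,  0, -1,  0,  1, -1, -1,  0],
      [ 0,  0,  0,  1,  1,  1,  0,  1,  0,  0,  1,  0, -1, -1,  1, -1,  0],
      [ 1,  1,  0, -1,  0,  1, -1, -1,  0,  0,  0,  1, -1,  0,  0,  0, -1],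
      [ 1, -1, -1,  0, -1,  0, -1,  0, -1,  0,  0, -1, -1,  0,  0,  0,  1],
      [ 0,  1,  1,  0,  0, -1,  0, -1,  1,  0,  0, -1, -1, -1,  0,  0,  1],
      [ 0,  0,  0,  0,  1,  0, -1, -1,  0, -1,  1,  0,  1,  1,  1,  0,  1],
      [ 1, -1,  1, -1,  0,  0,  0,  0,  0,  0,  0, -1,  1, -1,  1,  0, -1],
      [ 1,  1,  0, -1,  1,  0,  1,  1, -1,  0,  0,  0,  0,  0,  0,  1,  1],
      [ 0,  1,  0,  0,  0, -1,  0,  0, -1,  1,  1, -1,  0,  1,  0, -1, -1],
      [ 0,  1, -1,  1,  0,  0,  0,  0,  0, -1, -1, -1,  0,  0,  1,  1, -1],
      [ 0,  1,  0,  0, -1,  1,  0,  0,  0,  1, -1,  0,  1,  0,  1, -1,  1]]]"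

definition certificate_18 :: "int list list list" where
  "certificate_18 =
    [[[ 0,  1,  0, -1,  0,  0, -1,  0,  0,  1, -1,  0,  0,  0, -1,  1,  1,  1],
      [ 0,  1,  0,  1,  0,  0, -1,  0, -1, -1,  1, -1,  1,  0, -1,  0,  0,  0],
      [ 0,  1, -1,  0,  0, -1,  1,  1, -1,  0,  0,  1,  0,  0,  0, -1,  0,  1],
      [ 1,  0,  0,  0, -1,  1,  1,  0, -1,  0,  0, -1, -1,  1,  0,  0,  1,  0],
      [ 1,  0,  1,  1,  0,  0,  0,  1,  1,  0,  0,  1,  1,  1,  0,  0,  1,  0],
      [ 1,  0, -1,  0,  0,  0,  1,  0,  0,  0, -1,  0,  1,  0, -1,  1, -1, -1],
      [ 0,  0,  1,  0,  1, -1,  1,  0,  0, -1, -1, -1,  0, -1,  0,  0,  1,  0],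
      [ 0,  1,  1,  0, -1,  0,  0,  0, -1,  0,  0,  1,  0, -1,  1,  1,  0, -1],
      [ 1,  0,  1,  0,  0,  0,  0, -1,  0, -1,  0,  1, -1,  0, -1,  0, -1,  1],
      [ 0,  1,  0,  1, -1,  0,  0,  0,  1,  0, -1, -1,  0,  0,  1,  0, -1,  1],
      [ 1,  1,  0, -1,  1,  1,  0, -1,  0,  0,  0,  0,  1,  0,  1, -1,  0,  0],
      [ 1,  0, -1,  0,  1,  0, -1,  1,  0, -1,  0,  0, -1,  0,  1,  1,  0,  0],
      [ 1, -1,  0,  1,  0,  0, -1,  0, -1,  1, -1,  0,  0, -1,  0, -1,  0,  0],
      [ 1,  0, -1,  0, -1, -1,  0, -1,  1,  0,  1,  0,  0, -1,  0,  0,  1,  0],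
      [ 1,  0,  1, -1,  0, -1,  0,  1,  0,  1,  1, -1,  0,  0,  0,  0, -1,  0],
      [ 0,  1,  0,  1,  1, -1,  0, -1,  0,  1,  0,  0, -1,  1,  0,  0,  0, -1],
      [ 0,  0,  0,  1,  1,  1,  1,  0,  0,  1,  1,  0,  0, -1,  0,  1,  0,  1],
      [ 0,  1,  0,  0,  0,  1,  0,  1,  1,  0,  0,  0, -1, -1, -1, -1,  0, -1]],

     [[ 1,  0,  1,  0,  1,  0, -1, -1,  1,  1, -1,  1,  0,  0,  0,  0,  0,  0],
      [ 1,  0, -1, -1,  1,  1,  1,  1,  0,  0,  0,  1,  0, -1,  0,  0,  0,  0],
      [ 0,  1,  1, -1,  0,  0, -1,  0, -1,  0,  1,  0, -1, -1, -1,  0,  0,  0],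
      [ 0,  1,  0, -1, -1,  1,  0,  0,  1,  0,  0,  0, -1,  1,  1, -1,  0,  0],
      [ 1,  0,  0,  1,  0, -1,  0,  1,  0,  0,  1,  1, -1,  1,  0,  0, -1,  0],
      [ 1, -1,  0,  0,  0,  1, -1,  0,  0,  0,  1, -1,  1,  0,  0, -1, -1,  0],
      [ 1,  0, -1,  0, -1,  0, -1,  0, -1,  1,  0,  0,  0,  0,  1,  1,  1,  0],
      [ 0,  0,  1,  0,  1,  0,  0,  1,  1,  0,  1, -1,  0,  0,  1,  1,  1,  0],
      [ 0,  0,  0,  1,  0,  1,  0, -1,  0, -1,  0,  0, -1, -1,  1,  1, -1,  0],
      [ 1, -1,  0, -1,  0, -1,  1, -1,  0,  0,  0, -1, -1,  0,  0,  0,  0,  1],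
      [ 1,  1,  0,  0,  1,  0,  0,  0, -1, -1, -1, -1,  0,  1,  0,  0,  0, -1],
      [ 0,  0,  0,  1,  0,  1,  0,  1,  0,  1, -1, -1, -1,  0, -1,  0,  0,  1],
      [ 1,  1,  0,  0, -1,  0,  0,  0,  1, -1,  0,  0,  1,  0, -1,  1,  0,  1],
      [ 0,  0,  0,  0,  0,  1,  1, -1,  0,  1,  1,  0,  0,  1, -1,  1,  0, -1],
      [ 0,  1, -1,  0,  0, -1,  0,  0,  1,  1,  0, -1,  0, -1,  0,  0, -1, -1],
      [ 0,  1,  1,  0,  0,  0,  1,  0, -1,  1,  0,  0,  1,  0,  1,  0, -1,  1],
      [ 0,  1, -1,  1,  1,  0,  0, -1,  0,  0,  1,  0,  0,  0,  0, -1,  1,  1],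
      [ 1,  0,  1,  1, -1,  0,  1,  0,  0,  0,  0,  0,  0, -1,  0, -1,  1, -1]],

     [[ 1,  0, -1,  1,  0,  1,  0,  1, -1,  0, -1,  1,  0,  1,  0,  0,  0,  0],
      [ 1,  0, -1,  0,  1, -1,  0,  0, -1,  1,  1,  0, -1, -1,  0,  0,  0,  0],
      [ 1, -1, -1, -1,  0,  0, -1, -1,  1,  0,  0,  0,  0,  1,  1,  0,  0,  0],
      [ 0,  0,  0,  0,  1,  0,  1, -1,  0,  0, -1,  1,  1, -1,  1,  1,  0,  0],
      [ 0,  1, -1,  0,  1,  1,  0,  0,  1,  0,  1,  0,  1,  0, -1,  0, -1,  0],
      [ 1, -1,  1,  0,  0,  0,  0,  1,  1,  0,  0,  1,  0, -1,  0, -1, -1,  0],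
      [ 0,  1,  1, -1,  0,  0,  0,  0,  0,  1,  0,  1, -1,  1,  0,  1, -1,  0],
      [ 0,  1,  0,  0, -1,  0,  0,  0,  0,  1,  1,  1,  1,  0,  1, -1,  1,  0],
      [ 1,  0,  1,  0,  1,  0,  1, -1,  0,  0,  0,  0,  0,  1, -1, -1,  1,  0],
      [ 0,  0,  1,  0,  1,  1, -1,  0, -1, -1,  1,  0,  0,  0,  1,  0,  0, -1],
      [ 1,  1,  0, -1,  0,  0,  1,  1,  0, -1,  0, -1,  0,  0,  1,  0,  0,  1],
      [ 0,  0,  0,  1,  0,  1,  1,  0,  1,  1,  0, -1, -1,  0,  1,  0,  0, -1],
      [ 1,  0,  1,  1,  0,  0, -1,  0,  0,  1,  0, -1,  1,  0,  0,  1,  0,  1],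
      [ 0,  1,  0,  0,  0,  1, -1, -1,  0,  0, -1,  0, -1, -1,  0, -1,  0,  1],
      [ 1,  1,  0,  1, -1, -1,  0, -1,  0, -1,  0,  0,  0,  0,  0,  0, -1, -1],
      [ 0,  1,  0,  0,  1, -1, -1,  1,  1,  0, -1,  0,  0,  0,  0,  0,  1, -1],
      [ 0,  0,  0,  1,  0,  0,  0,  0,  1, -1,  1,  1, -1,  0,  0,  1,  1,  1],
      [ 1,  0,  0, -1, -1,  1,  0,  0,  0,  0,  0,  0,  0, -1, -1,  1,  1, -1]],

     [[ 1,  0,  0, -1, -1, -1,  1,  0,  0, -1, -1,  1,  0, -1,  0,  0,  0,  0],
      [ 1,  0, -1,  0,  0,  0,  1, -1,  0, -1,  1, -1,  1,  1,  0,  0,  0,  0],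
      [ 0,  1,  0,  0,  1,  0,  0,  1,  1, -1,  1,  1,  0,  0,  1, -1,  0,  0],
      [ 1,  0,  1,  0,  0, -1, -1, -1,  0,  0,  1,  0, -1,  0,  1,  1,  0,  0],
      [ 1,  0, -1, -1,  0,  0,  0,  1,  1,  1,  0, -1, -1,  0,  0,  0,  1,  0],
      [ 1,  1,  1,  1,  0,  0,  1,  0,  1,  1,  0,  0,  0,  0, -1,  0, -1,  0],
      [ 0,  1,  1, -1,  1,  1,  1,  0, -1,  0,  0,  0,  0,  0,  0,  1,  1,  0],
      [ 0,  0,  0,  0,  1, -1,  0,  1,  0,  0, -1, -1,  1,  0,  1,  1, -1,  0],
      [ 0,  0,  0,  1, -1,  1,  0,  0,  1,  0,  0,  0,  1, -1,  1,  1,  1,  0],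
      [ 1, -1,  0,  0,  0,  0,  0,  1, -1,  1,  1,  1,  1,  0,  0,  0,  0,  1],
      [ 0,  1, -1,  0,  0,  0,  0, -1,  0,  1, -1,  1,  0,  1,  1,  0,  0,  1],
      [ 0,  1,  1, -1, -1,  0, -1,  0,  0,  0,  0, -1,  1,  0,  0, -1,  0,  1],
      [ 1, -1,  1,  0,  0,  1,  0,  0,  0,  0, -1,  0,  0,  1,  1, -1,  0, -1],
      [ 0,  0,  0,  1,  0,  0,  1,  0, -1,  0,  0, -1, -1, -1,  1, -1,  0,  1],
      [ 1,  1, -1,  0,  0,  1, -1,  0, -1,  0,  0,  0,  0, -1,  0,  0, -1, -1],
      [ 0,  1,  0,  1, -1, -1,  0,  1, -1,  0,  0,  0,  0,  1,  0,  0,  1, -1],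
      [ 1,  0,  0,  1,  1,  0, -1,  0,  0, -1, -1,  0,  0,  0, -1,  0,  1,  1],
      [ 0,  0,  0,  0,  1, -1,  0, -1,  0,  1,  0,  0,  1, -1,  0, -1,  1, -1]]]"

lemma mutually_unbiased_rows_certificate_17: "mutually_unbiased_rows 17 3 certificate_17"
  by code_simp

lemma mutually_unbiased_rows_certificate_18: "mutually_unbiased_rows 18 3 certificate_18"
  by code_simp

theorem proposition6p7:
  shows "W_max 17 9 \<in> {5..18} \<and> W_max 18 9 \<in> {4..21}"
proof
  have "W_max 17 (3 ^ 2) \<in> {length certificate_17..18}"
    by (rule W_max_between_certificate[OF mutually_unbiased_rows_certificate_17]) auto
  then show "W_max 17 9 \<in> {5..18}"
    by (simp add: certificate_17_def)
  have "W_max 18 (3 ^ 2) \<in> {length certificate_18..21}"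
    by (rule W_max_between_certificate[OF mutually_unbiased_rows_certificate_18]) auto
  then show "W_max 18 9 \<in> {4..21}"
    by (simp add: certificate_18_def)
qed

end
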